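(* For every $i,j\in[K]$, $$\boldsymbol\tau^\star_{\mathrm{lin}}(\mathcal{Z}:\mathcal{X}-x_i)\le 4\,\boldsymbol\tau^\star_{\mathrm{lin}}(\mathcal{Z}:\mathcal{X}-x_j).$$
   Context: $\mathcal{X}=\{x_1,\dots,x_K\}\subset\mathbb{R}^d$, $\mathcal{Z}\subset\mathbb{R}^d$ finite, $\theta^\star\in\mathbb{R}^d$, and $z^\star$ the unique maximizer of $z^\top\theta^\star$ over $z\in\mathcal{Z}$. $\Delta^{(K)}$ is the probability simplex on $[K]$. Generalized inverse norm: for a positive semidefinite matrix $\mathbf A$ and $x\in\mathbb{R}^d$, $\|x\|_{\mathbf A^{-1}}:=\lim_{\lambda\to0^+}\sqrt{x^\top(\mathbf A+\lambda\mathbf I_d)^{-1}x}$ (equal to $+\infty$ if $x$ is not in the column space of $\mathbf A$). For $j\in[K]$ and $\mathbf p\in\Delta^{(K)}$, $\mathbf\Sigma_{-j,\mathbf p}:=\sum_{i=1}^Kp_i(x_i-x_j)(x_i-x_j)^\top$, and $$\boldsymbol\tau^\star_{\mathrm{lin}}(\mathcal{Z}:\mathcal{X}-x_j):=\min_{\mathbf p\in\Delta^{(K)}}\max_{z\in\mathcal{Z}\setminus\{z^\star\}}\frac{\|z^\star-z\|^2_{\mathbf\Sigma_{-j,\mathbf p}^{-1}}}{((z^\star-z)^\top\theta^\star)^2}$$ (with values in $[0,+\infty]$). *)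

theory Defs
  imports "HOL-Analysis.Analysis"
begin

definition outer :: "real^'d \<Rightarrow> real^'d \<Rightarrow> real^'d^'d" where
  "outer u v = (\<chi> a b. u $ a * v $ b)"

text \<open>Generalized inverse norm: lim_{lambda -> 0+} sqrt (x^T (A + lambda I)^{-1} x),
  taken in the extended reals (it is +infinity when x is not in the column space of A).\<close>
definition gen_inv_norm :: "real^'d^'d \<Rightarrow> real^'d \<Rightarrow> ereal" where
  "gen_inv_norm A x =
     Lim (at_right (0::real))
       (\<lambda>l. ereal (sqrt (x \<bullet> (matrix_inv (A + l *\<^sub>R mat 1) *v x))))"

definition prob_simplex :: "nat \<Rightarrow> (nat \<Rightarrow> real) set" where
  "prob_simplex K = {p. (\<forall>i\<in>{1..K}. 0 \<le> p i) \<and> (\<Sum>i=1..K. p i) = 1}"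

definition Sigma_minus :: "nat \<Rightarrow> (nat \<Rightarrow> real^'d) \<Rightarrow> nat \<Rightarrow> (nat \<Rightarrow> real) \<Rightarrow> real^'d^'d" where
  "Sigma_minus K x j p = (\<Sum>i=1..K. p i *\<^sub>R outer (x i - x j) (x i - x j))"

text \<open>tau*_lin(Z : X - x_j), with values in [0, +infinity] (min over the prob_simplex rendered as INF).\<close>
definition tau_lin :: "nat \<Rightarrow> (nat \<Rightarrow> real^'d) \<Rightarrow> (real^'d) set \<Rightarrow> real^'d \<Rightarrow> real^'d \<Rightarrow> nat \<Rightarrow> ereal" where
  "tau_lin K x Z \<theta> zs j =
     (INF p\<in>prob_simplex K. SUP z\<in>Z - {zs}.
        (gen_inv_norm (Sigma_minus K x j p) (zs - z))\<^sup>2 / ereal (((zs - z) \<bullet> \<theta>)\<^sup>2))"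

end

theory Submission
  imports Defs
begin

(* For p in the simplex let q = (p + e_j) / 2. Writing x_k - x_j = (x_k - x_i) - (x_j - x_i)
   and using (a - b)^2 <= 2 a^2 + 2 b^2 gives Sigma_{-j,p} <= 4 Sigma_{-i,q} in the Loewner
   order. A Loewner bound A <= c B reverses under inversion of the regularized matrices,
   (B + l I)^{-1} <= c (A + c l I)^{-1}, so letting l -> 0+ yields
   ||v||^2_{B^{-1}} <= c ||v||^2_{A^{-1}}. Hence the objective defining tau(Z : X - x_i) at q
   is at most 4 times the objective defining tau(Z : X - x_j) at p. *)

definition psd_matrix :: "real^'n^'n \<Rightarrow> bool" where
  "psd_matrix A \<longleftrightarrow> transpose A = A \<and> (\<forall>y. 0 \<le> y \<bullet> (A *v y))"

definition reg_inv_form :: "real^'n^'n \<Rightarrow> real^'n \<Rightarrow> real \<Rightarrow> real" where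
  "reg_inv_form A v l = v \<bullet> (matrix_inv (A + l *\<^sub>R mat 1) *v v)"

lemma sum_matrix_vector_mult:
  "(\<Sum>k\<in>S. (M k :: real^'n^'m)) *v y = (\<Sum>k\<in>S. M k *v y)"
  by (induction S rule: infinite_finite_induct) (auto simp: matrix_vector_mult_add_rdistrib)

lemma outer_self_mult_vector: "outer u u *v y = (u \<bullet> y) *\<^sub>R u"
  by (simp add: vec_eq_iff matrix_vector_mult_def outer_def inner_vec_def sum_distrib_left mult_ac)

lemma quadratic_form_sum_outer:
  "y \<bullet> ((\<Sum>k\<in>S. c k *\<^sub>R outer (u k) (u k)) *v y) = (\<Sum>k\<in>S. c k * (u k \<bullet> y)\<^sup>2)"
  by (simp add: sum_matrix_vector_mult inner_sum_right outer_self_mult_vector power2_eq_square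
      inner_commute mult.assoc flip: scaleR_matrix_vector_assoc)

lemma transpose_sum_outer:
  "transpose (\<Sum>k\<in>S. c k *\<^sub>R outer (u k) (u k)) = (\<Sum>k\<in>S. c k *\<^sub>R outer (u k) (u k))"
  by (simp add: vec_eq_iff transpose_def sum_component outer_def mult_ac)

lemma psd_matrix_sum_outer:
  assumes "\<And>k. k \<in> S \<Longrightarrow> 0 \<le> c k"
  shows "psd_matrix (\<Sum>k\<in>S. c k *\<^sub>R outer (u k) (u k))"
  unfolding psd_matrix_def transpose_sum_outer quadratic_form_sum_outer
  using assms by (auto intro: sum_nonneg)

lemma invertible_matrix_inv_cancel:
  fixes M :: "real^'n^'n"
  assumes "invertible M"
  shows "M *v (matrix_inv M *v v) = v"
proof -
  have "M ** matrix_inv M = mat 1"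
    using someI_ex[OF assms[unfolded invertible_def]] unfolding matrix_inv_def by auto
  then show ?thesis by (simp add: matrix_vector_mul_assoc)
qed

lemma invertible_if_coercive:
  fixes M :: "real^'n^'n"
  assumes "\<And>y. l * (y \<bullet> y) \<le> y \<bullet> (M *v y)" and "l > 0"
  shows "invertible M"
  unfolding invertible_left_inverse matrix_left_invertible_ker
proof (intro allI impI)
  fix y assume "M *v y = 0"
  then have "l * (y \<bullet> y) \<le> 0" using assms(1)[of y] by simp
  then have "y \<bullet> y \<le> 0" using assms(2) by (simp add: mult_le_0_iff)
  then show "y = 0" by (metis inner_gt_zero_iff not_le)
qed

lemma quadratic_form_shift:
  fixes A :: "real^'n^'n"
  shows "y \<bullet> ((A + l *\<^sub>R mat 1) *v y) = y \<bullet> (A *v y) + l * (y \<bullet> y)"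
  by (simp add: matrix_vector_mult_add_rdistrib inner_add_right flip: scaleR_matrix_vector_assoc)

lemma psd_matrix_shift:
  assumes "psd_matrix A" and "0 \<le> l"
  shows "psd_matrix (A + l *\<^sub>R mat 1)"
  using assms unfolding psd_matrix_def quadratic_form_shift
  by (simp add: vec_eq_iff transpose_def mat_def)

lemma invertible_psd_shift:
  assumes "psd_matrix A" and "l > 0"
  shows "invertible (A + l *\<^sub>R mat 1)"
  by (rule invertible_if_coercive[of l]) (use assms in \<open>auto simp: psd_matrix_def quadratic_form_shift\<close>)

lemma inverse_form_le_if_loewner_le:
  fixes M N :: "real^'n^'n"
  assumes M: "psd_matrix M" "invertible M" and N: "invertible N"
    and le: "\<And>y. y \<bullet> (M *v y) \<le> c * (y \<bullet> (N *v y))" and "c > 0"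
  shows "v \<bullet> (matrix_inv N *v v) \<le> c * (v \<bullet> (matrix_inv M *v v))"
proof -
  define w where "w = matrix_inv N *v v"
  define u where "u = matrix_inv M *v v"
  have Nw: "N *v w = v" and Mu: "M *v u = v"
    unfolding w_def u_def using M N by (simp_all add: invertible_matrix_inv_cancel)
  have "u \<bullet> (M *v w) = (M *v u) \<bullet> w"
    using M(1) by (simp add: psd_matrix_def dot_lmul_matrix flip: vector_transpose_matrix)
  then have uMw: "u \<bullet> (M *v w) = w \<bullet> v" using Mu by (simp add: inner_commute)
  have wMw: "w \<bullet> (M *v w) \<le> c * (w \<bullet> v)" using le[of w] Nw by simp
  \<comment> \<open>Expand the nonnegative form of \<open>M\<close> at \<open>w / c - u\<close>.\<close>
  define t where "t = 1 / c"
  have "0 \<le> (t *\<^sub>R w - u) \<bullet> (M *v (t *\<^sub>R w - u))"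
    using M(1) by (simp add: psd_matrix_def)
  also have "\<dots> = t * t * (w \<bullet> (M *v w)) - 2 * t * (u \<bullet> (M *v w)) + u \<bullet> (M *v u)"
    using Mu uMw by (simp add: matrix_vector_mult_diff_distrib matrix_vector_mult_scaleR
        inner_diff_left inner_diff_right algebra_simps inner_commute)
  also have "\<dots> \<le> t * t * (c * (w \<bullet> v)) - 2 * t * (w \<bullet> v) + u \<bullet> v"
    using wMw Mu uMw by (simp add: mult_left_mono)
  also have "\<dots> = u \<bullet> v - (w \<bullet> v) / c"
    using \<open>c > 0\<close> unfolding t_def by (simp add: field_simps)
  finally show ?thesis
    using \<open>c > 0\<close> unfolding w_def u_def by (simp add: field_simps inner_commute)
qed

lemma reg_inv_form_nonneg:
  assumes "psd_matrix A" and "l > 0"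
  shows "0 \<le> reg_inv_form A v l"
proof -
  let ?M = "A + l *\<^sub>R mat 1"
  define u where "u = matrix_inv ?M *v v"
  have "?M *v u = v"
    unfolding u_def by (rule invertible_matrix_inv_cancel[OF invertible_psd_shift[OF assms]])
  then have "reg_inv_form A v l = u \<bullet> (?M *v u)"
    unfolding reg_inv_form_def u_def by (simp add: inner_commute)
  then show ?thesis
    using psd_matrix_shift[OF assms(1)] assms(2) by (simp add: psd_matrix_def)
qed

lemma reg_inv_form_antimono:
  assumes "psd_matrix A" and "0 < l1" and "l1 \<le> l2"
  shows "reg_inv_form A v l2 \<le> reg_inv_form A v l1"
  using inverse_form_le_if_loewner_le[of "A + l1 *\<^sub>R mat 1" "A + l2 *\<^sub>R mat 1" 1 v] assms
  by (simp add: reg_inv_form_def psd_matrix_shift invertible_psd_shift quadratic_form_shift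
      mult_right_mono)

lemma gen_inv_norm_eq_SUP:
  assumes "psd_matrix A"
  shows "gen_inv_norm A v = (SUP l\<in>{0<..}. ereal (sqrt (reg_inv_form A v l)))"
proof -
  let ?g = "\<lambda>l. ereal (sqrt (reg_inv_form A v l))"
  let ?S = "SUP l\<in>{0<..}. ?g l"
  have below: "\<forall>\<^sub>F l in at_right 0. ?g l \<le> ?S"
    unfolding eventually_at_right_field by (intro exI[of _ 1]) (auto intro: SUP_upper)
  have above: "\<forall>\<^sub>F l in at_right 0. y < ?g l" if "y < ?S" for y
  proof -
    obtain l0 where l0: "l0 > 0" "y < ?g l0" using \<open>y < ?S\<close> by (auto simp: less_SUP_iff)
    have "y < ?g l" if "0 < l" "l < l0" for l
      using reg_inv_form_antimono[OF assms, of l l0 v] that l0 by (simp add: less_le_trans)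
    then show ?thesis unfolding eventually_at_right_field using l0 by auto
  qed
  have "(?g \<longlongrightarrow> ?S) (at_right 0)" by (rule increasing_tendsto[OF below above])
  then show ?thesis unfolding gen_inv_norm_def reg_inv_form_def
    by (intro tendsto_Lim) (auto simp: trivial_limit_at_right_real)
qed

lemma gen_inv_norm_nonneg:
  assumes "psd_matrix A"
  shows "0 \<le> gen_inv_norm A v"
proof -
  have "ereal (sqrt (reg_inv_form A v 1)) \<le> gen_inv_norm A v"
    unfolding gen_inv_norm_eq_SUP[OF assms] by (rule SUP_upper) auto
  moreover have "0 \<le> reg_inv_form A v 1" using reg_inv_form_nonneg[OF assms] by simp
  ultimately show ?thesis by (meson ereal_less_eq(5) order_trans real_sqrt_ge_zero)
qed

lemma gen_inv_norm_le_if_loewner_le: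
  assumes A: "psd_matrix A" and B: "psd_matrix B"
    and le: "\<And>y. y \<bullet> (A *v y) \<le> c * (y \<bullet> (B *v y))" and "c > 0"
  shows "gen_inv_norm B v \<le> ereal (sqrt c) * gen_inv_norm A v"
  unfolding gen_inv_norm_eq_SUP[OF B]
proof (rule SUP_least)
  fix l :: real assume "l \<in> {0<..}"
  then have "l > 0" by simp
  have shifted: "y \<bullet> ((A + (c * l) *\<^sub>R mat 1) *v y) \<le> c * (y \<bullet> ((B + l *\<^sub>R mat 1) *v y))" for y
    unfolding quadratic_form_shift using le[of y] by (simp add: algebra_simps)
  have "reg_inv_form B v l \<le> c * reg_inv_form A v (c * l)"
    unfolding reg_inv_form_def
    by (rule inverse_form_le_if_loewner_le[OF _ _ _ shifted])
      (use A B \<open>l > 0\<close> \<open>c > 0\<close> in \<open>simp_all add: psd_matrix_shift invertible_psd_shift\<close>)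
  then have "ereal (sqrt (reg_inv_form B v l)) \<le> ereal (sqrt c) * ereal (sqrt (reg_inv_form A v (c * l)))"
    by (simp add: real_sqrt_mult[symmetric])
  also have "\<dots> \<le> ereal (sqrt c) * gen_inv_norm A v"
    unfolding gen_inv_norm_eq_SUP[OF A]
    by (rule ereal_mult_left_mono) (use \<open>l > 0\<close> \<open>c > 0\<close> in \<open>auto intro: SUP_upper\<close>)
  finally show "ereal (sqrt (reg_inv_form B v l)) \<le> ereal (sqrt c) * gen_inv_norm A v" .
qed

lemma gen_inv_norm_sq_le_if_loewner_le:
  assumes A: "psd_matrix A" and B: "psd_matrix B"
    and le: "\<And>y. y \<bullet> (A *v y) \<le> c * (y \<bullet> (B *v y))" and "c > 0"
  shows "(gen_inv_norm B v)\<^sup>2 \<le> ereal c * (gen_inv_norm A v)\<^sup>2"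
proof -
  have le_sqrt: "gen_inv_norm B v \<le> ereal (sqrt c) * gen_inv_norm A v"
    by (rule gen_inv_norm_le_if_loewner_le[OF assms])
  have "0 \<le> gen_inv_norm B v" "0 \<le> gen_inv_norm A v"
    using A B by (simp_all add: gen_inv_norm_nonneg)
  then show ?thesis
  proof (cases "gen_inv_norm A v")
    case (real a)
    with le_sqrt \<open>0 \<le> gen_inv_norm B v\<close> obtain b
      where "gen_inv_norm B v = ereal b" "0 \<le> b" "b \<le> sqrt c * a"
      by (cases "gen_inv_norm B v") auto
    then have "b\<^sup>2 \<le> c * a\<^sup>2"
      using power_mono[of b "sqrt c * a" 2] \<open>c > 0\<close> by (simp add: power_mult_distrib)
    with \<open>gen_inv_norm B v = ereal b\<close> show ?thesis using real by simp
  qed (use \<open>c > 0\<close> in auto)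
qed

lemma ereal_divide_le_cmult:
  fixes a b :: ereal
  assumes "a \<le> ereal c * b" and "0 \<le> d"
  shows "a / ereal d \<le> ereal c * (b / ereal d)"
  using ereal_mult_right_mono[OF assms(1), of "inverse (ereal d)"] assms(2)
  by (simp add: divide_ereal_def ereal_inverse_nonneg_iff mult.assoc)

lemma INF_ereal_mult_left:
  fixes f :: "'a \<Rightarrow> ereal"
  assumes "c > 0"
  shows "(INF i\<in>I. ereal c * f i) = ereal c * (INF i\<in>I. f i)"
  using ereal_Inf_cmult[OF assms, of "\<lambda>y. y \<in> f ` I"]
  by (simp add: setcompr_eq_image image_image)

lemma quadratic_form_Sigma_minus:
  "y \<bullet> (Sigma_minus K x j p *v y) = (\<Sum>k=1..K. p k * ((x k - x j) \<bullet> y)\<^sup>2)"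
  unfolding Sigma_minus_def by (rule quadratic_form_sum_outer)

lemma psd_Sigma_minus: "p \<in> prob_simplex K \<Longrightarrow> psd_matrix (Sigma_minus K x j p)"
  unfolding Sigma_minus_def prob_simplex_def by (auto intro: psd_matrix_sum_outer)

lemma prob_simplex_midpoint_vertex:
  assumes "p \<in> prob_simplex K" and "j \<in> {1..K}"
  shows "(\<lambda>k. (p k + (if k = j then 1 else 0)) / 2) \<in> prob_simplex K"
  using assms by (simp add: prob_simplex_def sum.distrib flip: sum_divide_distrib)

lemma Sigma_minus_le_recentred:
  assumes p: "p \<in> prob_simplex K" and j: "j \<in> {1..K}"
  shows "y \<bullet> (Sigma_minus K x j p *v y)
    \<le> 4 * (y \<bullet> (Sigma_minus K x i (\<lambda>k. (p k + (if k = j then 1 else 0)) / 2) *v y))"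
proof -
  define a where "a k = (x k - x i) \<bullet> y" for k
  have p_nonneg: "0 \<le> p k" if "k \<in> {1..K}" for k using p that by (simp add: prob_simplex_def)
  have p_sum: "(\<Sum>k=1..K. p k) = 1" using p by (simp add: prob_simplex_def)
  have "y \<bullet> (Sigma_minus K x j p *v y) = (\<Sum>k=1..K. p k * (a k - a j)\<^sup>2)"
    unfolding quadratic_form_Sigma_minus a_def by (simp add: inner_diff_left)
  also have "\<dots> \<le> (\<Sum>k=1..K. p k * (2 * (a k)\<^sup>2 + 2 * (a j)\<^sup>2))"
  proof (rule sum_mono)
    fix k assume "k \<in> {1..K}"
    have "(a k - a j)\<^sup>2 \<le> 2 * (a k)\<^sup>2 + 2 * (a j)\<^sup>2"
      using zero_le_power2[of "a k + a j"] unfolding power2_diff power2_sum by linarith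
    then show "p k * (a k - a j)\<^sup>2 \<le> p k * (2 * (a k)\<^sup>2 + 2 * (a j)\<^sup>2)"
      using p_nonneg[OF \<open>k \<in> {1..K}\<close>] by (rule mult_left_mono)
  qed
  also have "\<dots> = 2 * (\<Sum>k=1..K. p k * (a k)\<^sup>2) + 2 * (a j)\<^sup>2"
    using p_sum by (simp add: distrib_left sum.distrib mult.left_commute[of "p _"]
        flip: sum_distrib_left sum_distrib_right)
  also have "\<dots> = 4 * ((\<Sum>k=1..K. p k * (a k)\<^sup>2) + (\<Sum>k=1..K. if k = j then (a k)\<^sup>2 else 0)) / 2"
    using j by simp
  also have "\<dots> = 4 * (\<Sum>k=1..K. p k * (a k)\<^sup>2 / 2 + (if k = j then (a k)\<^sup>2 else 0) / 2)"
    by (simp add: sum.distrib flip: sum_divide_distrib)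
  also have "\<dots> = 4 * (\<Sum>k=1..K. (p k + (if k = j then 1 else 0)) / 2 * (a k)\<^sup>2)"
    by (intro arg_cong[where f = "(*) 4"] sum.cong) (auto simp: field_simps)
  also have "\<dots> = 4 * (y \<bullet> (Sigma_minus K x i (\<lambda>k. (p k + (if k = j then 1 else 0)) / 2) *v y))"
    unfolding quadratic_form_Sigma_minus a_def ..
  finally show ?thesis .
qed

lemma tau_lin_le_if_loewner_dominated:
  assumes "c > 0"
    and dom: "\<And>p. p \<in> prob_simplex K \<Longrightarrow> \<exists>q\<in>prob_simplex K.
      \<forall>y. y \<bullet> (Sigma_minus K x j p *v y) \<le> c * (y \<bullet> (Sigma_minus K x i q *v y))"
  shows "tau_lin K x Z \<theta> zs i \<le> ereal c * tau_lin K x Z \<theta> zs j"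
proof -
  define ratio where "ratio k r z =
    (gen_inv_norm (Sigma_minus K x k r) (zs - z))\<^sup>2 / ereal (((zs - z) \<bullet> \<theta>)\<^sup>2)" for k r z
  have tau: "tau_lin K x Z \<theta> zs k = (INF r\<in>prob_simplex K. SUP z\<in>Z - {zs}. ratio k r z)" for k
    unfolding tau_lin_def ratio_def ..
  have "tau_lin K x Z \<theta> zs i \<le> ereal c * (SUP z\<in>Z - {zs}. ratio j p z)"
    if p: "p \<in> prob_simplex K" for p
  proof -
    obtain q where q: "q \<in> prob_simplex K"
      and le: "\<And>y. y \<bullet> (Sigma_minus K x j p *v y) \<le> c * (y \<bullet> (Sigma_minus K x i q *v y))"
      using dom[OF p] by blast
    have "ratio i q z \<le> ereal c * (SUP z\<in>Z - {zs}. ratio j p z)" if "z \<in> Z - {zs}" for z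
    proof -
      have "ratio i q z \<le> ereal c * ratio j p z"
        unfolding ratio_def
        by (intro ereal_divide_le_cmult gen_inv_norm_sq_le_if_loewner_le psd_Sigma_minus p q le
            \<open>c > 0\<close>) simp
      also have "\<dots> \<le> ereal c * (SUP z\<in>Z - {zs}. ratio j p z)"
        using that \<open>c > 0\<close> by (intro ereal_mult_left_mono SUP_upper) simp_all
      finally show ?thesis .
    qed
    then have "(SUP z\<in>Z - {zs}. ratio i q z) \<le> ereal c * (SUP z\<in>Z - {zs}. ratio j p z)"
      by (rule SUP_least)
    then show ?thesis
      using q unfolding tau by (meson INF_lower order_trans)
  qed
  then have "tau_lin K x Z \<theta> zs i \<le> (INF p\<in>prob_simplex K. ereal c * (SUP z\<in>Z - {zs}. ratio j p z))"
    by (rule INF_greatest)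
  then show ?thesis
    by (simp only: tau[of j] INF_ereal_mult_left[OF \<open>c > 0\<close>])
qed

theorem mainTheorem2:
  fixes K :: nat and x :: "nat \<Rightarrow> real^'d" and Z :: "(real^'d) set"
    and \<theta> :: "real^'d" and zs :: "real^'d" and i j :: nat
  assumes "finite Z"
    and "zs \<in> Z"
    and "\<forall>z\<in>Z. z \<noteq> zs \<longrightarrow> z \<bullet> \<theta> < zs \<bullet> \<theta>"
    and "i \<in> {1..K}" and "j \<in> {1..K}"
  shows "tau_lin K x Z \<theta> zs i \<le> 4 * tau_lin K x Z \<theta> zs j"
proof -
  \<comment> \<open>Only \<open>j \<in> {1..K}\<close> is used: the comparison needs no assumption on \<open>Z\<close> and \<open>\<theta>\<close>, since
    dividing by a zero gap multiplies by \<open>\<infinity>\<close> in \<open>ereal\<close>, which is monotone as well.\<close>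
  have "tau_lin K x Z \<theta> zs i \<le> ereal 4 * tau_lin K x Z \<theta> zs j"
  proof (rule tau_lin_le_if_loewner_dominated)
    fix p assume "p \<in> prob_simplex K"
    then show "\<exists>q\<in>prob_simplex K.
        \<forall>y. y \<bullet> (Sigma_minus K x j p *v y) \<le> 4 * (y \<bullet> (Sigma_minus K x i q *v y))"
      using prob_simplex_midpoint_vertex Sigma_minus_le_recentred \<open>j \<in> {1..K}\<close> by blast
  qed simp
  then show ?thesis by simp
qed

end
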